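(* Let $K=\mathbb{Q}(\rho)$ be a simplest cubic field, where $\rho$ is a root of $x^3-ax^2-(a+3)x-1$ with $a\in\mathbb{Z}_{\geq-1}$, and let $\Delta=a^2+3a+9$. (1) If $p>3$ is a prime with $p^2\mid\Delta$, then there are integers $1\leq k,l\leq p-1$ with $\frac{k+l\rho+\rho^2}{p}\in\mathcal{O}_K$ and $2k-l\equiv -2\pmod p$. (2) In particular, if $p>3$ is prime and $K$ has integral basis $\{1,\rho,\frac{k+l\rho+\rho^2}{p}\}$ with $1\leq k,l\leq p-1$, then $2k-l\equiv-2\pmod p$. *)

theory Defs
  imports "HOL-Computational_Algebra.Polynomial" "HOL-Number_Theory.Cong" Complex_Main
begin

definition simplest_cubic_poly :: "int \<Rightarrow> complex poly" where
  "simplest_cubic_poly a = [:-1, - of_int (a + 3), - of_int a, 1:]"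

definition cubic_field :: "complex \<Rightarrow> complex set" where
  "cubic_field \<rho> = {of_rat q0 + of_rat q1 * \<rho> + of_rat q2 * \<rho>^2 | q0 q1 q2. True}"

definition ring_of_integers :: "complex \<Rightarrow> complex set" where
  "ring_of_integers \<rho> = {x \<in> cubic_field \<rho>. algebraic_int x}"

definition is_integral_basis :: "complex \<Rightarrow> complex \<Rightarrow> complex \<Rightarrow> complex \<Rightarrow> bool" where
  "is_integral_basis \<rho> b0 b1 b2 \<longleftrightarrow>
     ring_of_integers \<rho> = {of_int m0 * b0 + of_int m1 * b1 + of_int m2 * b2 | m0 m1 m2. True}"

end

theory Submission
  imports Defs "Jordan_Normal_Form.Char_Poly"
begin

text \<open>Choose c with a \<equiv> 3c (mod p^2). Then p^2 | a^2 + 3a + 9 becomes p^2 | c^2 + c + 1, and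
  \<eta> = \<rho> - c satisfies \<eta>^3 \<equiv> 0 modulo p^2 \<Z>[\<eta>]. Hence the \<Z>-span of 1, \<eta>, \<eta>^2/p is a ring,
  so its elements are eigenvalues of integer matrices, i.e. algebraic integers. With k \<equiv> c^2 and
  l \<equiv> -2c (mod p), the element (k + l\<rho> + \<rho>^2)/p lies in this span, and 2k - l + 2 \<equiv> 2(c^2 + c + 1) \<equiv> 0.

  Conversely, if 1, \<rho>, \<theta> = (k + l\<rho> + \<rho>^2)/p is an integral basis, then \<theta>^2 is integral, hence an
  integer combination of 1, \<rho>, \<theta>. As 1, \<rho>, \<rho>^2 are linearly independent over \<rat>, p divides the
  three coordinates of (k + l\<rho> + \<rho>^2)^2, and a suitable integer combination of these is
  (2k + 2 - l)^4.\<close>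

lemma eigenvector_of_stable_int_span:
  fixes y :: "nat \<Rightarrow> 'a :: comm_ring_1" and b :: "nat \<Rightarrow> nat \<Rightarrow> int"
  assumes "i < n" "y i \<noteq> 0"
    and stable: "\<And>i. i < n \<Longrightarrow> x * y i = (\<Sum>j<n. of_int (b i j) * y j)"
  shows "eigenvector (map_mat of_int (mat n n (\<lambda>(i, j). b i j))) (vec n y) x"
proof -
  have "map_mat of_int (mat n n (\<lambda>(i, j). b i j)) *\<^sub>v vec n y = x \<cdot>\<^sub>v vec n y"
  proof (rule eq_vecI)
    fix i assume "i < dim_vec (x \<cdot>\<^sub>v vec n y)"
    then have i: "i < n" by simp
    have "(map_mat of_int (mat n n (\<lambda>(i, j). b i j)) *\<^sub>v vec n y) $ i
        = (\<Sum>j<n. of_int (b i j) * y j)"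
      using i by (simp add: scalar_prod_def atLeast0LessThan)
    also have "\<dots> = (x \<cdot>\<^sub>v vec n y) $ i"
      using i stable by simp
    finally show "(map_mat of_int (mat n n (\<lambda>(i, j). b i j)) *\<^sub>v vec n y) $ i = (x \<cdot>\<^sub>v vec n y) $ i" .
  qed simp
  moreover have "vec n y \<noteq> 0\<^sub>v n"
    using assms(1,2) by (metis index_vec index_zero_vec(1))
  ultimately show ?thesis
    unfolding eigenvector_def by simp
qed

lemma algebraic_int_if_int_eigenvector:
  fixes x :: "'a :: field_char_0"
  assumes B: "B \<in> carrier_mat n n" and "eigenvector (map_mat of_int B) v x"
  shows "algebraic_int x"
proof -
  have "map_mat of_int B \<in> carrier_mat n n"
    using B by simp
  moreover have "eigenvalue (map_mat of_int B) x"
    using assms(2) unfolding eigenvalue_def by blast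
  ultimately have "poly (char_poly (map_mat of_int B)) x = 0"
    using eigenvalue_root_char_poly by blast
  moreover have "char_poly (map_mat of_int B :: 'a mat) = map_poly of_int (char_poly B)"
    by (rule of_int_hom.char_poly_hom[OF B])
  moreover have "lead_coeff (char_poly B) = 1"
    using degree_monic_char_poly[OF B] by simp
  ultimately show ?thesis
    unfolding algebraic_int_altdef_ipoly by auto
qed

lemma algebraic_int_if_stable_int_span:
  fixes x :: "'a :: field_char_0" and y :: "nat \<Rightarrow> 'a" and b :: "nat \<Rightarrow> nat \<Rightarrow> int"
  assumes "i < n" "y i \<noteq> 0"
    and "\<And>i. i < n \<Longrightarrow> x * y i = (\<Sum>j<n. of_int (b i j) * y j)"
  shows "algebraic_int x"
  using algebraic_int_if_int_eigenvector[OF mat_carrier eigenvector_of_stable_int_span[OF assms]] .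

lemma algebraic_int_imp_int_eigenvector:
  fixes x :: "'a :: field_char_0"
  assumes "algebraic_int x"
  obtains n B v where "B \<in> carrier_mat n n" "eigenvector (map_mat of_int B) v x"
proof -
  obtain P :: "int poly" where root: "poly (map_poly of_int P) x = 0" and monic: "lead_coeff P = 1"
    using assms by (auto simp: algebraic_int_altdef_ipoly)
  define d where "d = degree P"
  have "d > 0"
    using root monic by (cases "d = 0") (auto simp: d_def poly_altdef degree_map_poly)
  have top: "x * x ^ (d - 1) = (\<Sum>j<d. of_int (- coeff P j) * x ^ j)"
  proof -
    have "0 = (\<Sum>j\<le>d. of_int (coeff P j) * x ^ j)"
      using root by (simp add: poly_altdef d_def degree_map_poly)
    also have "\<dots> = (\<Sum>j<d. of_int (coeff P j) * x ^ j) + x ^ d"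
      using monic by (simp add: lessThan_Suc_atMost[symmetric] d_def)
    finally show ?thesis
      using \<open>d > 0\<close> by (simp add: sum_negf eq_neg_iff_add_eq_0 add.commute flip: power_Suc)
  qed
  \<comment> \<open>the companion matrix of P, acting on (1, x, ..., x^(d-1))\<close>
  define b where "b i j = (if i + 1 < d then (if j = i + 1 then 1 else 0) else - coeff P j)" for i j
  have "x * x ^ i = (\<Sum>j<d. of_int (b i j) * x ^ j)" if "i < d" for i
  proof (cases "i + 1 < d")
    case True
    then have "(\<Sum>j<d. of_int (b i j) * x ^ j) = (\<Sum>j<d. if j = i + 1 then x ^ j else 0)"
      by (intro sum.cong) (auto simp: b_def)
    with True show ?thesis by simp
  next
    case False
    then have "i = d - 1" using that by simp
    then show ?thesis using False top by (simp add: b_def)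
  qed
  then have "eigenvector (map_mat of_int (mat d d (\<lambda>(i, j). b i j))) (vec d (\<lambda>i. x ^ i)) x"
    using \<open>d > 0\<close> by (intro eigenvector_of_stable_int_span[of 0]) auto
  then show ?thesis
    by (rule that[OF mat_carrier])
qed

lemma algebraic_int_power:
  fixes x :: "'a :: field_char_0"
  assumes "algebraic_int x"
  shows "algebraic_int (x ^ k)"
proof -
  obtain n B v where B: "B \<in> carrier_mat n n" and ev: "eigenvector (map_mat of_int B) v x"
    using algebraic_int_imp_int_eigenvector[OF assms] .
  have "map_mat of_int (B ^\<^sub>m k) *\<^sub>v v = x ^ k \<cdot>\<^sub>v v"
    using eigenvector_pow[of "map_mat of_int B" n, OF _ ev] B by (simp add: of_int_hom.mat_hom_pow)
  with ev B have "eigenvector (map_mat of_int (B ^\<^sub>m k)) v (x ^ k)"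
    by (simp add: eigenvector_def)
  then show ?thesis
    using B by (intro algebraic_int_if_int_eigenvector[of "B ^\<^sub>m k" n]) auto
qed

lemma algebraic_int_square_div_plus:
  fixes \<eta> :: "'a :: field_char_0" and p A B C m n :: int
  assumes "p \<noteq> 0"
    and cube: "\<eta> ^ 3 = of_int p ^ 2 * (of_int A * \<eta> ^ 2 + of_int B * \<eta> + of_int C)"
  shows "algebraic_int (of_int m + of_int n * \<eta> + \<eta> ^ 2 / of_int p)"
proof -
  define \<zeta> where "\<zeta> = \<eta> ^ 2 / of_int p"
  have sq: "\<eta> ^ 2 = of_int p * \<zeta>"
    using \<open>p \<noteq> 0\<close> by (simp add: \<zeta>_def)
  have "of_int p * (\<eta> * \<zeta>) = of_int p * (of_int p ^ 2 * of_int A * \<zeta> + of_int p * of_int B * \<eta> + of_int p * of_int C)"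
    using cube sq by Groebner_Basis.algebra
  then have mult_\<eta>: "\<eta> * \<zeta> = of_int p ^ 2 * of_int A * \<zeta> + of_int p * of_int B * \<eta> + of_int p * of_int C"
    using \<open>p \<noteq> 0\<close> by simp
  have "of_int p * \<zeta> ^ 2 = of_int p * (of_int A * \<eta> ^ 3 + of_int B * \<eta> ^ 2 + of_int C * \<eta>)"
    using mult_\<eta> sq by Groebner_Basis.algebra
  then have mult_\<zeta>: "\<zeta> ^ 2 = of_int A * \<eta> ^ 3 + of_int B * \<eta> ^ 2 + of_int C * \<eta>"
    using \<open>p \<noteq> 0\<close> by simp
  define \<theta> where "\<theta> = of_int m + of_int n * \<eta> + \<zeta>"
  have row1: "\<theta> * \<eta> = of_int (p * C) * 1 + of_int (m + p * B) * \<eta> + of_int (n * p + p ^ 2 * A) * \<zeta>"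
    unfolding \<theta>_def of_int_add of_int_mult of_int_power using sq mult_\<eta> by Groebner_Basis.algebra
  have row2: "\<theta> * \<zeta> = of_int (n * p * C + A * C * p ^ 2) * 1 + of_int (n * p * B + A * B * p ^ 2 + C) * \<eta>
      + of_int (m + n * p ^ 2 * A + A ^ 2 * p ^ 3 + B * p) * \<zeta>"
    unfolding \<theta>_def of_int_add of_int_mult of_int_power using sq mult_\<eta> mult_\<zeta> cube
    by Groebner_Basis.algebra
  define y where "y = nth [1, \<eta>, \<zeta>]"
  define b where "b = nth [[m, n, 1], [p * C, m + p * B, n * p + p ^ 2 * A],
      [n * p * C + A * C * p ^ 2, n * p * B + A * B * p ^ 2 + C, m + n * p ^ 2 * A + A ^ 2 * p ^ 3 + B * p]]"
  have "\<theta> * y i = (\<Sum>j<3. of_int (b i ! j) * y j)" if "i < 3" for i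
  proof -
    have "i = 0 \<or> i = 1 \<or> i = 2"
      using that by auto
    then show ?thesis
      using row1 row2 by (auto simp: y_def b_def \<theta>_def numeral_3_eq_3 lessThan_Suc)
  qed
  then have "algebraic_int \<theta>"
    by (intro algebraic_int_if_stable_int_span[of 0 3 y _ "\<lambda>i j. b i ! j"]) (auto simp: y_def)
  then show ?thesis
    by (simp add: \<theta>_def \<zeta>_def)
qed

lemma rat_cubic_root_independent:
  fixes x :: "'a :: field_char_0" and c0 c1 c2 u0 u1 u2 :: rat
  assumes cube: "x ^ 3 = of_rat c2 * x ^ 2 + of_rat c1 * x + of_rat c0"
    and no_rat_root: "\<And>q. q ^ 3 \<noteq> c2 * q ^ 2 + c1 * q + c0"
    and "of_rat u0 + of_rat u1 * x + of_rat u2 * x ^ 2 = 0"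
  shows "u0 = 0 \<and> u1 = 0 \<and> u2 = 0"
proof -
  have linear: "v0 = 0 \<and> v1 = 0" if "of_rat v0 + of_rat v1 * x = 0" for v0 v1
  proof (rule ccontr)
    assume "\<not> (v0 = 0 \<and> v1 = 0)"
    with that have "v1 \<noteq> 0"
      by auto
    define q where "q = - v0 / v1"
    have "x = of_rat q"
      using that \<open>v1 \<noteq> 0\<close> by (simp add: q_def of_rat_divide of_rat_minus field_simps eq_neg_iff_add_eq_0)
    with cube have "of_rat (q ^ 3) = (of_rat (c2 * q ^ 2 + c1 * q + c0) :: 'a)"
      by (simp add: of_rat_add of_rat_mult of_rat_power)
    with no_rat_root show False
      by (simp only: of_rat_eq_iff)
  qed
  have "u2 = 0"
  proof (rule ccontr)
    assume "u2 \<noteq> 0"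
    define u v where "u = - u1 / u2" and "v = - u0 / u2"
    have sq: "x ^ 2 = of_rat u * x + of_rat v"
      using assms(3) \<open>u2 \<noteq> 0\<close>
      by (simp add: u_def v_def of_rat_divide of_rat_minus field_simps eq_neg_iff_add_eq_0)
    have "of_rat (u * v - c2 * v - c0) + of_rat (u * u + v - c2 * u - c1) * x = 0"
      unfolding of_rat_add of_rat_diff of_rat_mult using sq cube by Groebner_Basis.algebra
    then have "u * v - c2 * v - c0 = 0" "u * u + v - c2 * u - c1 = 0"
      using linear by blast+
    then have "(c2 - u) ^ 3 = c2 * (c2 - u) ^ 2 + c1 * (c2 - u) + c0"
      by Groebner_Basis.algebra
    with no_rat_root show False
      by blast
  qed
  with assms(3) linear show ?thesis
    by simp
qed

lemma simplest_cubic_root_cube: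
  assumes "poly (simplest_cubic_poly a) \<rho> = 0"
  shows "\<rho> ^ 3 = of_int a * \<rho> ^ 2 + of_int (a + 3) * \<rho> + 1"
proof -
  have "poly (simplest_cubic_poly a) \<rho> = \<rho> ^ 3 - of_int a * \<rho> ^ 2 - of_int (a + 3) * \<rho> - 1"
    by (simp add: simplest_cubic_poly_def algebra_simps power2_eq_square power3_eq_cube)
  with assms show ?thesis
    by (simp add: algebra_simps)
qed

lemma simplest_cubic_no_rat_root:
  fixes q :: rat
  shows "q ^ 3 \<noteq> of_int a * q ^ 2 + of_int (a + 3) * q + 1"
proof
  assume root: "q ^ 3 = of_int a * q ^ 2 + of_int (a + 3) * q + 1"
  have "algebraic_int q"
  proof (rule algebraic_int.intros[of "[:-1, - of_int (a + 3), - of_int a, 1:]"])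
    show "\<forall>i. coeff [:-1, - of_int (a + 3), - of_int a, 1:] i \<in> (\<int> :: rat set)"
      by (auto simp: coeff_pCons split: nat.split)
    show "poly [:-1, - of_int (a + 3), - of_int a, 1:] q = 0"
      using root by (simp add: algebra_simps power2_eq_square power3_eq_cube)
  qed simp
  then have "q \<in> \<int>"
    by (rule rational_algebraic_int_is_int) (metis Rats_of_rat id_apply of_rat_eq_id)
  then obtain n where n: "q = of_int n"
    by (auto elim: Ints_cases)
  with root have "n ^ 3 = a * n ^ 2 + (a + 3) * n + 1"
    by (metis (mono_tags) of_int_add of_int_eq_iff of_int_mult of_int_1 of_int_power)
  then have "n * (n ^ 2 - a * n - (a + 3)) = 1"
    by (simp add: algebra_simps power2_eq_square power3_eq_cube)
  then have "n = 1 \<or> n = -1"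
    using zmult_eq_1_iff by blast
  with \<open>n ^ 3 = a * n ^ 2 + (a + 3) * n + 1\<close> show False
    by auto presburger
qed

lemma simplest_cubic_root_int_independent:
  assumes "poly (simplest_cubic_poly a) \<rho> = 0"
    and "of_int i0 + of_int i1 * \<rho> + of_int i2 * \<rho> ^ 2 = 0"
  shows "i0 = 0 \<and> i1 = 0 \<and> i2 = 0"
proof -
  have "\<rho> ^ 3 = of_rat (of_int a) * \<rho> ^ 2 + of_rat (of_int (a + 3)) * \<rho> + of_rat 1"
    using simplest_cubic_root_cube[OF assms(1)] by (simp only: of_rat_of_int_eq of_rat_1)
  moreover have "of_rat (of_int i0) + of_rat (of_int i1) * \<rho> + of_rat (of_int i2) * \<rho> ^ 2 = 0"
    using assms(2) by simp
  ultimately show ?thesis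
    using rat_cubic_root_independent simplest_cubic_no_rat_root by (metis of_int_eq_0_iff)
qed

lemma int_combination_div_in_cubic_field:
  "(of_int i + of_int j * \<rho> + of_int k * \<rho> ^ 2) / of_int d \<in> cubic_field \<rho>"
  unfolding cubic_field_def
proof (intro CollectI exI conjI)
  show "(of_int i + of_int j * \<rho> + of_int k * \<rho> ^ 2) / of_int d
      = of_rat (of_int i / of_int d) + of_rat (of_int j / of_int d) * \<rho> + of_rat (of_int k / of_int d) * \<rho> ^ 2"
    by (simp add: of_rat_divide add_divide_distrib)
qed simp

lemma cube_root_of_unity_mod_prime_square:
  fixes p a :: int
  assumes "prime p" "p > 3" "p ^ 2 dvd a ^ 2 + 3 * a + 9"
  obtains c where "p ^ 2 dvd a - 3 * c" "p ^ 2 dvd c ^ 2 + c + 1"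
proof -
  have "\<not> p dvd 3"
    using \<open>p > 3\<close> by (auto dest: zdvd_imp_le)
  then have "coprime (p ^ 2) 3"
    using prime_imp_coprime[OF \<open>prime p\<close>] by simp
  then have "gcd 3 (p ^ 2) dvd a"
    by (simp add: coprime_iff_gcd_eq_1 gcd.commute)
  then obtain c where "[3 * c = a] (mod p ^ 2)"
    using cong_solve_dvd_int by blast
  then have dvd_a: "p ^ 2 dvd a - 3 * c"
    by (simp add: cong_iff_dvd_diff dvd_diff_commute)
  have "p ^ 2 dvd (a ^ 2 + 3 * a + 9) - (a - 3 * c) * (a + 3 * c + 3)"
    using dvd_diff[OF assms(3) dvd_mult2[OF dvd_a]] .
  also have "\<dots> = 3 ^ 2 * (c ^ 2 + c + 1)"
    by Groebner_Basis.algebra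
  finally have "p ^ 2 dvd 3 ^ 2 * (c ^ 2 + c + 1)" .
  moreover have "coprime (p ^ 2) (3 ^ 2)"
    using \<open>coprime (p ^ 2) 3\<close> by (simp only: coprime_power_right_iff) simp
  ultimately have "p ^ 2 dvd c ^ 2 + c + 1"
    using coprime_dvd_mult_right_iff by blast
  with dvd_a show ?thesis
    using that by blast
qed

lemma simplest_cubic_shifted_root_cube:
  assumes "poly (simplest_cubic_poly a) \<rho> = 0"
    and "a - 3 * c = q * t" "c ^ 2 + c + 1 = q * e"
  shows "(\<rho> - of_int c) ^ 3 = of_int q * (of_int t * (\<rho> - of_int c) ^ 2
      + of_int (3 * e + (2 * c + 1) * t) * (\<rho> - of_int c) + of_int ((2 * c + 1) * e + (c ^ 2 + c) * t))"
proof -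
  have "of_int a - 3 * of_int c = (of_int q * of_int t :: complex)"
    using arg_cong[OF assms(2), of "of_int :: int \<Rightarrow> complex"] by simp
  moreover have "of_int c ^ 2 + of_int c + 1 = (of_int q * of_int e :: complex)"
    using arg_cong[OF assms(3), of "of_int :: int \<Rightarrow> complex"] by simp
  ultimately show ?thesis
    using simplest_cubic_root_cube[OF assms(1)]
    unfolding of_int_add of_int_mult of_int_power of_int_numeral of_int_1 by Groebner_Basis.algebra
qed

lemma residues_of_cube_root_of_unity:
  fixes p c :: int
  assumes "prime p" "p > 3" "p dvd c ^ 2 + c + 1"
  defines "k \<equiv> c ^ 2 mod p" and "l \<equiv> (- 2 * c) mod p"
  shows "1 \<le> k" "k \<le> p - 1" "1 \<le> l" "l \<le> p - 1"
    and "p dvd l + 2 * c" "p dvd k + l * c + c ^ 2" "[2 * k - l = -2] (mod p)"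
proof -
  have "\<not> p dvd c"
  proof
    assume "p dvd c"
    then have "p dvd 1"
      using assms(3) by (metis dvd_add_right_iff dvd_mult2 power2_eq_square)
    with \<open>prime p\<close> show False
      using not_prime_unit by blast
  qed
  moreover have "\<not> p dvd 2"
    using \<open>p > 3\<close> by (auto dest: zdvd_imp_le)
  ultimately have "\<not> p dvd c ^ 2" "\<not> p dvd - 2 * c"
    using \<open>prime p\<close> by (auto simp: prime_dvd_mult_iff dest: prime_dvd_power)
  then have "k \<noteq> 0" "l \<noteq> 0"
    unfolding k_def l_def by (simp_all only: mod_eq_0_iff_dvd) blast+
  moreover have "0 \<le> k" "k < p" "0 \<le> l" "l < p"
    using \<open>p > 3\<close> by (simp_all add: k_def l_def)
  ultimately show "1 \<le> k" "k \<le> p - 1" "1 \<le> l" "l \<le> p - 1"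
    by simp_all
  have k: "[k = c ^ 2] (mod p)" and l: "[l = - 2 * c] (mod p)"
    by (simp_all add: k_def l_def cong_def)
  from l show "p dvd l + 2 * c"
    by (simp add: cong_iff_dvd_diff)
  have "[k + l * c + c ^ 2 = c ^ 2 + (- 2 * c) * c + c ^ 2] (mod p)"
    by (intro cong_add cong_mult k l cong_refl)
  also have "c ^ 2 + (- 2 * c) * c + c ^ 2 = 0"
    by (simp add: power2_eq_square)
  finally show "p dvd k + l * c + c ^ 2"
    by (simp add: cong_0_iff)
  have "[2 * k - l + 2 = 2 * c ^ 2 - (- 2 * c) + 2] (mod p)"
    by (intro cong_add cong_diff cong_mult k l cong_refl)
  also have "2 * c ^ 2 - (- 2 * c) + 2 = 2 * (c ^ 2 + c + 1)"
    by simp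
  also have "[\<dots> = 0] (mod p)"
    unfolding cong_0_iff using assms(3) by (rule dvd_mult)
  finally show "[2 * k - l = -2] (mod p)"
    by (simp add: cong_0_iff cong_iff_dvd_diff)
qed

lemma simplest_cubic_integral_element:
  fixes a :: int and \<rho> :: complex and p :: nat
  assumes root: "poly (simplest_cubic_poly a) \<rho> = 0"
    and "prime p" "p > 3" "int (p ^ 2) dvd a ^ 2 + 3 * a + 9"
  shows "\<exists>k l :: int. 1 \<le> k \<and> k \<le> int p - 1 \<and> 1 \<le> l \<and> l \<le> int p - 1 \<and>
           (of_int k + of_int l * \<rho> + \<rho> ^ 2) / of_nat p \<in> ring_of_integers \<rho> \<and>
           [2 * k - l = -2] (mod int p)"
proof -
  define P where "P = int p"
  have "prime P" "P > 3" "P ^ 2 dvd a ^ 2 + 3 * a + 9"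
    using assms(2-4) by (simp_all add: P_def)
  then obtain c where "P ^ 2 dvd a - 3 * c" "P ^ 2 dvd c ^ 2 + c + 1"
    by (rule cube_root_of_unity_mod_prime_square)
  then obtain t e where te: "a - 3 * c = P ^ 2 * t" "c ^ 2 + c + 1 = P ^ 2 * e"
    by (elim dvdE)
  define \<eta> where "\<eta> = \<rho> - of_int c"
  have cube: "\<eta> ^ 3 = of_int P ^ 2 * (of_int t * \<eta> ^ 2 + of_int (3 * e + (2 * c + 1) * t) * \<eta>
      + of_int ((2 * c + 1) * e + (c ^ 2 + c) * t))"
    using simplest_cubic_shifted_root_cube[OF root te] unfolding \<eta>_def of_int_power .
  define k l where "k = c ^ 2 mod P" and "l = (- 2 * c) mod P"
  have "P dvd c ^ 2 + c + 1"
    using te(2) by simp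
  note residues = residues_of_cube_root_of_unity[OF \<open>prime P\<close> \<open>P > 3\<close> this, folded k_def l_def]
  obtain n m where "l + 2 * c = P * n" "k + l * c + c ^ 2 = P * m"
    using residues(5,6) by (elim dvdE)
  then have "of_int l + 2 * of_int c = (of_int P * of_int n :: complex)"
    "of_int k + of_int l * of_int c + of_int c ^ 2 = (of_int P * of_int m :: complex)"
    by (metis of_int_add of_int_mult of_int_numeral of_int_power)+
  then have "of_int k + of_int l * \<rho> + \<rho> ^ 2 = of_int P * (of_int m + of_int n * \<eta>) + \<eta> ^ 2"
    unfolding \<eta>_def by Groebner_Basis.algebra
  moreover have "P \<noteq> 0"
    using \<open>P > 3\<close> by simp
  ultimately have \<theta>: "(of_int k + of_int l * \<rho> + \<rho> ^ 2) / of_nat p = of_int m + of_int n * \<eta> + \<eta> ^ 2 / of_int P"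
    by (simp add: P_def field_simps)
  have "(of_int k + of_int l * \<rho> + \<rho> ^ 2) / of_nat p \<in> ring_of_integers \<rho>"
    unfolding ring_of_integers_def
    using algebraic_int_square_div_plus[OF \<open>P \<noteq> 0\<close> cube] int_combination_div_in_cubic_field[of k l \<rho> 1 P] \<theta>
    by (simp add: P_def)
  with residues show ?thesis
    unfolding P_def by blast
qed

lemma cong_if_prime_dvd_square_coordinates:
  fixes p a k l :: int
  assumes "prime p"
    and "p dvd a + k ^ 2 + 2 * l"
    and "p dvd a ^ 2 + 2 * a * l + 3 * a + 2 * k * l + 6 * l + 1"
    and "p dvd a ^ 2 + 2 * a * l + a + 2 * k + l ^ 2 + 3"
  shows "[2 * k - l = -2] (mod p)"
proof -
  obtain x y z where xyz: "a + k ^ 2 + 2 * l = p * x"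
      "a ^ 2 + 2 * a * l + 3 * a + 2 * k * l + 6 * l + 1 = p * y"
      "a ^ 2 + 2 * a * l + a + 2 * k + l ^ 2 + 3 = p * z"
    using assms(2-4) by (elim dvdE)
  define g where "g = 2 * k + 2 - l"
  have "g ^ 4 = p * ((2 * (k + 1) ^ 2 + 2 * (k + 1) * g + 2 * (k + 1) + g ^ 2) * (z - y) - 2 * (y + z)
      + (4 * a + 16 * k ^ 2 - 12 * k * l + 44 * k + 2 * l ^ 2 - 12 * l + 32) * x)"
    using xyz unfolding g_def by Groebner_Basis.algebra
  then have "p dvd g ^ 4"
    by simp
  then have "p dvd g"
    using \<open>prime p\<close> prime_dvd_power by blast
  then show ?thesis
    by (simp add: g_def cong_iff_dvd_diff algebra_simps)
qed

lemma simplest_cubic_square_coordinates: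
  assumes "poly (simplest_cubic_poly a) \<rho> = 0"
    and "of_int P * \<theta> = of_int k + of_int l * \<rho> + \<rho> ^ 2"
  shows "of_int P ^ 2 * \<theta> ^ 2 = of_int (a + k ^ 2 + 2 * l)
      + of_int (a ^ 2 + 2 * a * l + 3 * a + 2 * k * l + 6 * l + 1) * \<rho>
      + of_int (a ^ 2 + 2 * a * l + a + 2 * k + l ^ 2 + 3) * \<rho> ^ 2"
  using assms(2) simplest_cubic_root_cube[OF assms(1)]
  unfolding of_int_add of_int_mult of_int_power of_int_numeral of_int_1
  by Groebner_Basis.algebra

lemma dvd_coordinates_if_square_in_int_span:
  assumes root: "poly (simplest_cubic_poly a) \<rho> = 0"
    and \<theta>: "of_int P * \<theta> = of_int k + of_int l * \<rho> + \<rho> ^ 2"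
    and sq: "of_int P ^ 2 * \<theta> ^ 2 = of_int \<alpha> + of_int \<beta> * \<rho> + of_int \<gamma> * \<rho> ^ 2"
    and "\<theta> ^ 2 = of_int n0 + of_int n1 * \<rho> + of_int n2 * \<theta>"
  shows "P dvd \<alpha>" "P dvd \<beta>" "P dvd \<gamma>"
proof -
  have "of_int (\<alpha> - P ^ 2 * n0 - P * n2 * k) + of_int (\<beta> - P ^ 2 * n1 - P * n2 * l) * \<rho>
      + of_int (\<gamma> - P * n2) * \<rho> ^ 2 = 0"
    using assms(4) sq \<theta> unfolding of_int_diff of_int_mult of_int_power by Groebner_Basis.algebra
  then have "\<alpha> - P ^ 2 * n0 - P * n2 * k = 0 \<and> \<beta> - P ^ 2 * n1 - P * n2 * l = 0 \<and> \<gamma> - P * n2 = 0"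
    by (rule simplest_cubic_root_int_independent[OF root])
  then have "\<alpha> = P * (P * n0 + n2 * k)" "\<beta> = P * (P * n1 + n2 * l)" "\<gamma> = P * n2"
    by (auto simp: algebra_simps power2_eq_square)
  then show "P dvd \<alpha>" "P dvd \<beta>" "P dvd \<gamma>"
    by simp_all
qed

lemma integral_basis_imp_cong:
  fixes a :: int and \<rho> :: complex and p :: nat and k l :: int
  assumes root: "poly (simplest_cubic_poly a) \<rho> = 0" and "prime p"
    and basis: "is_integral_basis \<rho> 1 \<rho> ((of_int k + of_int l * \<rho> + \<rho> ^ 2) / of_nat p)"
  shows "[2 * k - l = -2] (mod int p)"
proof -
  define P where "P = int p"
  define \<theta> where "\<theta> = (of_int k + of_int l * \<rho> + \<rho> ^ 2) / (of_nat p :: complex)"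
  have "prime P"
    using \<open>prime p\<close> by (simp add: P_def)
  then have "of_int P \<noteq> (0 :: complex)"
    by auto
  then have \<theta>_eq: "of_int P * \<theta> = of_int k + of_int l * \<rho> + \<rho> ^ 2"
    by (simp add: \<theta>_def P_def)
  have O: "ring_of_integers \<rho> = {of_int m0 * 1 + of_int m1 * \<rho> + of_int m2 * \<theta> | m0 m1 m2. True}"
    using basis unfolding is_integral_basis_def \<theta>_def .
  have "\<theta> = of_int 0 * 1 + of_int 0 * \<rho> + of_int 1 * \<theta>"
    by simp
  then have "\<theta> \<in> ring_of_integers \<rho>"
    unfolding O by blast
  then have "algebraic_int (\<theta> ^ 2)"
    by (simp add: ring_of_integers_def algebraic_int_power)
  note sq = simplest_cubic_square_coordinates[OF root \<theta>_eq]
  have "\<theta> ^ 2 = of_int P ^ 2 * \<theta> ^ 2 / of_int (P ^ 2)"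
    using \<open>of_int P \<noteq> 0\<close> by simp
  then have "\<theta> ^ 2 \<in> cubic_field \<rho>"
    unfolding sq using int_combination_div_in_cubic_field by metis
  with \<open>algebraic_int (\<theta> ^ 2)\<close> have "\<theta> ^ 2 \<in> ring_of_integers \<rho>"
    by (simp add: ring_of_integers_def)
  then obtain n0 n1 n2 where "\<theta> ^ 2 = of_int n0 + of_int n1 * \<rho> + of_int n2 * \<theta>"
    unfolding O by auto
  with root \<theta>_eq sq have "[2 * k - l = -2] (mod P)"
    by (intro cong_if_prime_dvd_square_coordinates[OF \<open>prime P\<close>] dvd_coordinates_if_square_in_int_span)
  then show ?thesis
    by (simp add: P_def)
qed

theorem corollary4p3:
  fixes a :: int and \<rho> :: complex
  assumes "a \<ge> -1"
    and "poly (simplest_cubic_poly a) \<rho> = 0"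
  shows "(\<forall>p::nat. prime p \<and> p > 3 \<and> int (p^2) dvd (a^2 + 3*a + 9) \<longrightarrow>
            (\<exists>k l :: int. 1 \<le> k \<and> k \<le> int p - 1 \<and> 1 \<le> l \<and> l \<le> int p - 1 \<and>
               (of_int k + of_int l * \<rho> + \<rho>^2) / of_nat p \<in> ring_of_integers \<rho> \<and>
               [2*k - l = -2] (mod int p)))
       \<and> (\<forall>(p::nat) (k::int) (l::int). prime p \<and> p > 3 \<and>
            1 \<le> k \<and> k \<le> int p - 1 \<and> 1 \<le> l \<and> l \<le> int p - 1 \<and>
            is_integral_basis \<rho> 1 \<rho> ((of_int k + of_int l * \<rho> + \<rho>^2) / of_nat p) \<longrightarrow>
            [2*k - l = -2] (mod int p))"
  using simplest_cubic_integral_element[OF assms(2)] integral_basis_imp_cong[OF assms(2)] by blast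

end
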